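(* A commutative loop $Q$ of finite order $n$ has a subloop of even order if and only if $n$ is even.
   Context: A loop is a set $Q$ with a binary operation (juxtaposition) and neutral element $e$ such that for all $a,b$ the equations $ax=b$, $ya=b$ have unique solutions. A subloop is a subset containing $e$ which is itself a loop under the restricted operation. *)

theory Defs
  imports Main
begin

definition loop :: "'a set \<Rightarrow> ('a \<Rightarrow> 'a \<Rightarrow> 'a) \<Rightarrow> 'a \<Rightarrow> bool" where
  "loop Q m e \<longleftrightarrow>
     e \<in> Q \<and>
     (\<forall>a\<in>Q. \<forall>b\<in>Q. m a b \<in> Q) \<and>
     (\<forall>a\<in>Q. m e a = a \<and> m a e = a) \<and>
     (\<forall>a\<in>Q. \<forall>b\<in>Q. \<exists>!x. x \<in> Q \<and> m a x = b) \<and>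
     (\<forall>a\<in>Q. \<forall>b\<in>Q. \<exists>!y. y \<in> Q \<and> m y a = b)"

definition subloop :: "'a set \<Rightarrow> 'a set \<Rightarrow> ('a \<Rightarrow> 'a \<Rightarrow> 'a) \<Rightarrow> 'a \<Rightarrow> bool" where
  "subloop S Q m e \<longleftrightarrow> S \<subseteq> Q \<and> e \<in> S \<and> loop S m e"

definition commutative_loop :: "'a set \<Rightarrow> ('a \<Rightarrow> 'a \<Rightarrow> 'a) \<Rightarrow> 'a \<Rightarrow> bool" where
  "commutative_loop Q m e \<longleftrightarrow> loop Q m e \<and> (\<forall>a\<in>Q. \<forall>b\<in>Q. m a b = m b a)"

end

theory Submission
  imports Defs "HOL-Library.Disjoint_Sets" "HOL-Library.Z2"
begin

text \<open>In a finite commutative loop \<open>Q\<close>, for each \<open>b \<in> Q\<close> the map sending \<open>x\<close> to the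
  solution \<open>y\<close> of \<open>x y = b\<close> is an involution of \<open>Q\<close> whose fixed points are the square roots
  of \<open>b\<close>; hence \<open>|Q|\<close> and the number of square roots of \<open>b\<close> have the same parity.
  If \<open>|Q|\<close> is odd, every element therefore has a square root, so squaring is a bijection
  and \<open>e\<close> is the only element with \<open>x x = e\<close>. A subloop of even order, on the other
  hand, has an even number of square roots of \<open>e\<close>, one of them \<open>e\<close>, hence one
  different from \<open>e\<close>.\<close>

lemma even_card_fixpoint_free_involution:
  assumes "\<And>x. x \<in> X \<Longrightarrow> h x \<in> X" "\<And>x. x \<in> X \<Longrightarrow> h (h x) = x"
    and "\<And>x. x \<in> X \<Longrightarrow> h x \<noteq> x"
  shows "even (card X)"
proof -
  \<comment> \<open>Count in \<open>\<int>/2\<close>, where each pair \<open>{x, h x}\<close> contributes \<open>1 + 1 = 0\<close>.\<close>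
  have "(\<Sum>x\<in>X. 1 :: bit) = 0"
    by (rule sum_involution_eq_0[OF _ assms]) simp
  then have "of_nat (card X) = (0 :: bit)"
    by simp
  then show ?thesis
    using even_of_nat_iff[of "card X", where 'a = bit] by simp
qed

lemma even_card_iff_even_card_fixpoints_involution:
  assumes "finite X" "\<And>x. x \<in> X \<Longrightarrow> h x \<in> X" "\<And>x. x \<in> X \<Longrightarrow> h (h x) = x"
  shows "even (card X) \<longleftrightarrow> even (card {x\<in>X. h x = x})"
proof -
  have "card X = card ({x\<in>X. h x = x} \<union> {x\<in>X. h x \<noteq> x})"
    by (rule arg_cong[where f = card]) blast
  also have "\<dots> = card {x\<in>X. h x = x} + card {x\<in>X. h x \<noteq> x}"
    using assms(1) by (intro card_Un_disjoint) auto
  moreover have "even (card {x\<in>X. h x \<noteq> x})"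
    by (rule even_card_fixpoint_free_involution[where h = h]) (auto simp: assms(2,3))
  ultimately show ?thesis
    by simp
qed

lemma loop_mult_closed:
  assumes "loop Q m e" "a \<in> Q" "b \<in> Q"
  shows "m a b \<in> Q"
  using assms unfolding loop_def by simp

lemma loop_unit:
  assumes "loop Q m e"
  shows "e \<in> Q" and "a \<in> Q \<Longrightarrow> m e a = a" and "a \<in> Q \<Longrightarrow> m a e = a"
  using assms unfolding loop_def by simp_all

lemma loop_left_division_unique:
  assumes "loop Q m e" "a \<in> Q" "b \<in> Q"
  shows "\<exists>!x. x \<in> Q \<and> m a x = b"
  using assms unfolding loop_def by simp

lemma commutative_loop_subloop:
  assumes "commutative_loop Q m e" "subloop S Q m e"
  shows "commutative_loop S m e"
  using assms unfolding commutative_loop_def subloop_def by blast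

lemma even_card_iff_even_card_square_roots:
  assumes comm: "commutative_loop Q m e" and "finite Q" and b: "b \<in> Q"
  shows "even (card Q) \<longleftrightarrow> even (card {x\<in>Q. m x x = b})"
proof -
  have loop: "loop Q m e" and commute: "\<And>x y. x \<in> Q \<Longrightarrow> y \<in> Q \<Longrightarrow> m x y = m y x"
    using comm unfolding commutative_loop_def by auto
  have uniq: "\<exists>!y. y \<in> Q \<and> m x y = b" if "x \<in> Q" for x
    using loop_left_division_unique[OF loop that b] .
  define h where "h x = (THE y. y \<in> Q \<and> m x y = b)" for x
  have h: "h x \<in> Q" "m x (h x) = b" if "x \<in> Q" for x
    using theI'[OF uniq[OF that]] unfolding h_def by auto
  have h_eqI: "h x = y" if "x \<in> Q" "y \<in> Q" "m x y = b" for x y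
    unfolding h_def by (rule the1_equality[OF uniq[OF that(1)]]) (simp add: that)
  have "h (h x) = x" if "x \<in> Q" for x
  proof (rule h_eqI)
    show "m (h x) x = b"
      using h[OF that] commute that by metis
  qed (use h that in auto)
  with h have "even (card Q) \<longleftrightarrow> even (card {x\<in>Q. h x = x})"
    by (intro even_card_iff_even_card_fixpoints_involution \<open>finite Q\<close>)
  also have "{x\<in>Q. h x = x} = {x\<in>Q. m x x = b}"
    using h(2) h_eqI by (metis (no_types, lifting))
  finally show ?thesis .
qed

lemma inj_on_square_if_odd_card:
  assumes comm: "commutative_loop Q m e" and "finite Q" and "odd (card Q)"
  shows "inj_on (\<lambda>x. m x x) Q"
proof -
  have loop: "loop Q m e"
    using comm unfolding commutative_loop_def by simp
  have "b \<in> (\<lambda>x. m x x) ` Q" if "b \<in> Q" for b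
  proof -
    have "odd (card {x\<in>Q. m x x = b})"
      using even_card_iff_even_card_square_roots[OF comm \<open>finite Q\<close> that] \<open>odd (card Q)\<close>
      by simp
    then have "card {x\<in>Q. m x x = b} > 0"
      by (rule odd_pos)
    then show ?thesis
      by (auto simp: card_gt_0_iff)
  qed
  moreover have "(\<lambda>x. m x x) ` Q \<subseteq> Q"
    using loop_mult_closed[OF loop] by auto
  ultimately have "(\<lambda>x. m x x) ` Q = Q"
    by blast
  then show ?thesis
    using \<open>finite Q\<close> by (simp add: eq_card_imp_inj_on)
qed

lemma even_card_commutative_loop_obtains_square_root_of_unit:
  assumes comm: "commutative_loop S m e" and "finite S" and "even (card S)"
  obtains a where "a \<in> S" "a \<noteq> e" "m a a = e"
proof -
  have "loop S m e"
    using comm unfolding commutative_loop_def by simp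
  then have e: "e \<in> {x\<in>S. m x x = e}"
    by (simp add: loop_unit)
  have "even (card {x\<in>S. m x x = e})"
    using even_card_iff_even_card_square_roots[OF comm \<open>finite S\<close>] e \<open>even (card S)\<close>
    by simp
  then have "{x\<in>S. m x x = e} \<noteq> {e}"
    by auto
  with e show ?thesis
    using that by blast
qed

theorem corollary3p2:
  fixes Q :: "'a set" and m :: "'a \<Rightarrow> 'a \<Rightarrow> 'a" and e :: 'a and n :: nat
  assumes "commutative_loop Q m e"
    and "finite Q"
    and "card Q = n"
  shows "(\<exists>S. subloop S Q m e \<and> even (card S)) \<longleftrightarrow> even n"
proof
  assume "\<exists>S. subloop S Q m e \<and> even (card S)"
  then obtain S where S: "subloop S Q m e" "even (card S)"
    by blast
  have "commutative_loop S m e"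
    using commutative_loop_subloop[OF assms(1) S(1)] .
  moreover have "finite S"
    using S(1) assms(2) finite_subset unfolding subloop_def by auto
  ultimately obtain a where a: "a \<in> S" "a \<noteq> e" "m a a = e"
    using S(2) by (rule even_card_commutative_loop_obtains_square_root_of_unit)
  have "loop Q m e"
    using assms(1) unfolding commutative_loop_def by simp
  then have "e \<in> Q" "m e e = e"
    by (simp_all add: loop_unit)
  moreover have "a \<in> Q"
    using a(1) S(1) unfolding subloop_def by auto
  ultimately have "\<not> inj_on (\<lambda>x. m x x) Q"
    using a(2,3) inj_onD[of "\<lambda>x. m x x" Q a e] by auto
  then show "even n"
    using inj_on_square_if_odd_card[OF assms(1,2)] assms(3) by blast
next
  assume "even n"
  moreover have "subloop Q Q m e"
    using assms(1) loop_unit(1) unfolding subloop_def commutative_loop_def by auto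
  ultimately show "\<exists>S. subloop S Q m e \<and> even (card S)"
    using assms(3) by blast
qed

end
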